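(* Let $N=(V,E)$ be a tree-child phylogenetic network such that no two parents of a hybrid node are connected by a path. For all nodes $u,v\in V$, the following are equivalent: (i) $C(u)=C(v)$; (ii) $u=v$, or $\{u,v\}$ consists of a hybrid node and its only child.
   Context: A DAG is labeled in a finite set $S$ if its leaves (out-degree 0) are bijectively labeled by $S$. A tree node has in-degree at most 1; a hybrid node has in-degree greater than 1; a tree child of a node is a child that is a tree node. A tree-child phylogenetic network is a rooted DAG labeled in $S$ in which every non-leaf node has at least one tree child, no tree node has out-degree 1, and every hybrid node has out-degree exactly 1. The condition that no two parents of a hybrid node are connected by a path means: if $u_1,u_2$ are the parents of a hybrid node, there is no path $u_1\rightsquigarrow u_2$ nor $u_2\rightsquigarrow u_1$. $C(u)$ (the cluster of $u$) is the set of leaves that are descendants of $u$ (reachable from $u$ by a path, including $u$ itself if it is a leaf). *)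

theory Defs
  imports Main
begin

definition children :: "('a \<times> 'a) set \<Rightarrow> 'a \<Rightarrow> 'a set" where
  "children E u = {v. (u, v) \<in> E}"

definition parents :: "('a \<times> 'a) set \<Rightarrow> 'a \<Rightarrow> 'a set" where
  "parents E v = {u. (u, v) \<in> E}"

definition indeg :: "('a \<times> 'a) set \<Rightarrow> 'a \<Rightarrow> nat" where
  "indeg E v = card (parents E v)"

definition outdeg :: "('a \<times> 'a) set \<Rightarrow> 'a \<Rightarrow> nat" where
  "outdeg E v = card (children E v)"

definition is_leaf :: "('a \<times> 'a) set \<Rightarrow> 'a \<Rightarrow> bool" where
  "is_leaf E v \<longleftrightarrow> outdeg E v = 0"

definition leaves :: "'a set \<Rightarrow> ('a \<times> 'a) set \<Rightarrow> 'a set" where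
  "leaves V E = {v \<in> V. is_leaf E v}"

definition tree_node :: "('a \<times> 'a) set \<Rightarrow> 'a \<Rightarrow> bool" where
  "tree_node E v \<longleftrightarrow> indeg E v \<le> 1"

definition hybrid_node :: "('a \<times> 'a) set \<Rightarrow> 'a \<Rightarrow> bool" where
  "hybrid_node E v \<longleftrightarrow> indeg E v > 1"

definition tree_child :: "('a \<times> 'a) set \<Rightarrow> 'a \<Rightarrow> 'a \<Rightarrow> bool" where
  "tree_child E u v \<longleftrightarrow> (u, v) \<in> E \<and> tree_node E v"

definition is_dag :: "'a set \<Rightarrow> ('a \<times> 'a) set \<Rightarrow> bool" where
  "is_dag V E \<longleftrightarrow> finite V \<and> E \<subseteq> V \<times> V \<and> acyclic E"

definition rooted_dag :: "'a set \<Rightarrow> ('a \<times> 'a) set \<Rightarrow> bool" where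
  "rooted_dag V E \<longleftrightarrow> is_dag V E \<and>
     (\<exists>r \<in> V. indeg E r = 0 \<and> (\<forall>v \<in> V. (r, v) \<in> E\<^sup>*))"

definition labeled_in :: "'a set \<Rightarrow> ('a \<times> 'a) set \<Rightarrow> ('a \<Rightarrow> 's) \<Rightarrow> 's set \<Rightarrow> bool" where
  "labeled_in V E lab S \<longleftrightarrow> bij_betw lab (leaves V E) S"

definition tree_child_network ::
  "'a set \<Rightarrow> ('a \<times> 'a) set \<Rightarrow> ('a \<Rightarrow> 's) \<Rightarrow> 's set \<Rightarrow> bool" where
  "tree_child_network V E lab S \<longleftrightarrow>
     rooted_dag V E \<and> labeled_in V E lab S \<and>
     (\<forall>u \<in> V. \<not> is_leaf E u \<longrightarrow> (\<exists>v. tree_child E u v)) \<and>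
     (\<forall>u \<in> V. tree_node E u \<longrightarrow> outdeg E u \<noteq> 1) \<and>
     (\<forall>u \<in> V. hybrid_node E u \<longrightarrow> outdeg E u = 1)"

definition hybrid_parents_unconnected :: "'a set \<Rightarrow> ('a \<times> 'a) set \<Rightarrow> bool" where
  "hybrid_parents_unconnected V E \<longleftrightarrow>
     (\<forall>h \<in> V. hybrid_node E h \<longrightarrow>
        (\<forall>u1 \<in> parents E h. \<forall>u2 \<in> parents E h. u1 \<noteq> u2 \<longrightarrow>
           (u1, u2) \<notin> E\<^sup>* \<and> (u2, u1) \<notin> E\<^sup>*))"

definition cluster :: "'a set \<Rightarrow> ('a \<times> 'a) set \<Rightarrow> 'a \<Rightarrow> 'a set" where
  "cluster V E u = {x \<in> leaves V E. (u, x) \<in> E\<^sup>*}"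

end

theory Submission
  imports Defs
begin

text \<open>Every node reaches a leaf along edges into tree nodes, and since tree nodes have a
unique parent, any ancestor of that leaf lies either on this tree path or above its start.
Hence if \<open>C(u) = C(v)\<close> with \<open>u \<noteq> v\<close>, one of them, say \<open>u\<close>, reaches the other by a
nonempty tree path. If \<open>u\<close> were a tree node it would have a second child \<open>c\<close>; the leaf below
\<open>c\<close> along tree edges lies in \<open>C(v)\<close>, which forces \<open>c\<close> and the child of \<open>u\<close> on that tree
path to be connected by a path, producing a hybrid node with two parents connected by a path.
So \<open>u\<close> is hybrid, its only child \<open>w\<close> has the same cluster, and \<open>w\<close> is a tree node, so the
same argument forces \<open>w = v\<close>.\<close>

definition tree_edges :: "('a \<times> 'a) set \<Rightarrow> ('a \<times> 'a) set" where
  "tree_edges E = {(x, y). (x, y) \<in> E \<and> tree_node E y}"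

lemma tree_edges_subset: "tree_edges E \<subseteq> E"
  by (auto simp: tree_edges_def)

lemma trancl_tree_edges_subset: "(a, b) \<in> (tree_edges E)\<^sup>+ \<Longrightarrow> (a, b) \<in> E\<^sup>+"
  using trancl_mono tree_edges_subset by blast

lemma rtrancl_tree_edges_subset: "(a, b) \<in> (tree_edges E)\<^sup>* \<Longrightarrow> (a, b) \<in> E\<^sup>*"
  using rtrancl_mono tree_edges_subset by blast

lemma tree_node_parent_unique:
  assumes "finite E" "tree_node E c" "(p, c) \<in> E" "(q, c) \<in> E"
  shows "p = q"
proof (rule ccontr)
  assume "p \<noteq> q"
  have "parents E c \<subseteq> fst ` E"
    by (force simp: parents_def)
  hence "finite (parents E c)"
    using assms(1) finite_subset by blast
  moreover have "{p, q} \<subseteq> parents E c"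
    using assms(3,4) by (auto simp: parents_def)
  ultimately have "card {p, q} \<le> card (parents E c)"
    by (rule card_mono)
  hence "2 \<le> card (parents E c)"
    using \<open>p \<noteq> q\<close> by simp
  thus False
    using assms(2) by (simp add: tree_node_def indeg_def)
qed

lemma hybrid_node_if_two_parents:
  assumes "finite E" "(p, c) \<in> E" "(q, c) \<in> E" "p \<noteq> q"
  shows "hybrid_node E c"
proof -
  have "\<not> tree_node E c"
    using tree_node_parent_unique[OF assms(1) _ assms(2,3)] assms(4) by blast
  then show ?thesis
    by (simp add: tree_node_def hybrid_node_def)
qed

lemma cluster_eq_if_children_singleton:
  assumes "children E u = {w}"
  shows "cluster V E u = cluster V E w"
proof -
  have "(u, x) \<in> E\<^sup>* \<longleftrightarrow> (w, x) \<in> E\<^sup>*" if "x \<in> leaves V E" for x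
  proof
    assume "(u, x) \<in> E\<^sup>*"
    moreover have "x \<noteq> u"
      using that assms by (auto simp: leaves_def is_leaf_def outdeg_def)
    ultimately obtain y where "(u, y) \<in> E" "(y, x) \<in> E\<^sup>*"
      by (metis converse_rtranclE)
    moreover have "y = w"
      using assms calculation(1) by (auto simp: children_def)
    ultimately show "(w, x) \<in> E\<^sup>*"
      by simp
  next
    assume "(w, x) \<in> E\<^sup>*"
    moreover have "(u, w) \<in> E"
      using assms by (auto simp: children_def)
    ultimately show "(u, x) \<in> E\<^sup>*"
      by (meson converse_rtrancl_into_rtrancl)
  qed
  thus ?thesis
    by (auto simp: cluster_def)
qed

lemma ancestor_of_tree_path_end:
  assumes "finite E" "(a, b) \<in> (tree_edges E)\<^sup>*" "(y, b) \<in> E\<^sup>*"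
  shows "(y, a) \<in> E\<^sup>* \<or> ((a, y) \<in> (tree_edges E)\<^sup>+ \<and> (y, b) \<in> (tree_edges E)\<^sup>*)"
  using assms(2,3)
proof (induction arbitrary: y rule: rtrancl_induct)
  case base
  then show ?case by simp
next
  case (step b c)
  show ?case
  proof (cases "y = c")
    case True
    then show ?thesis
      using step.hyps by (simp add: rtrancl_into_trancl1)
  next
    case False
    with step.prems obtain p where p: "(y, p) \<in> E\<^sup>*" "(p, c) \<in> E"
      by (metis rtranclD tranclD2)
    have "p = b"
      using tree_node_parent_unique[OF assms(1) _ p(2)] step.hyps(2)
      by (auto simp: tree_edges_def)
    with step.IH p(1) step.hyps(2) show ?thesis
      by (meson rtrancl.rtrancl_into_rtrancl)
  qed
qed

lemma tree_path_to_leaf: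
  assumes "finite E" "acyclic E" "E \<subseteq> V \<times> V"
    and tree_child_exists: "\<And>u. u \<in> V \<Longrightarrow> \<not> is_leaf E u \<Longrightarrow> \<exists>v. tree_child E u v"
    and "a \<in> V"
  shows "\<exists>x \<in> leaves V E. (a, x) \<in> (tree_edges E)\<^sup>*"
proof -
  have "wf (E\<inverse>)"
    using finite_acyclic_wf_converse assms(1,2) by blast
  then show ?thesis
    using \<open>a \<in> V\<close>
  proof (induction a rule: wf_induct_rule)
    case (less a)
    show ?case
    proof (cases "is_leaf E a")
      case True
      then show ?thesis
        using less.prems by (auto simp: leaves_def)
    next
      case False
      then obtain c where "tree_child E a c"
        using tree_child_exists less.prems by blast
      hence "(a, c) \<in> tree_edges E" "(c, a) \<in> E\<inverse>" "c \<in> V"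
        using assms(3) by (auto simp: tree_child_def tree_edges_def)
      then show ?thesis
        using less.IH by (meson converse_rtrancl_into_rtrancl)
    qed
  qed
qed

locale unconnected_tree_child_network =
  fixes V :: "'a set" and E :: "('a \<times> 'a) set" and lab :: "'a \<Rightarrow> 's" and S :: "'s set"
  assumes network: "tree_child_network V E lab S"
    and unconnected: "hybrid_parents_unconnected V E"
begin

lemma finite_V: "finite V" and edges_subset: "E \<subseteq> V \<times> V" and acyclic_E: "acyclic E"
  using network by (auto simp: tree_child_network_def rooted_dag_def is_dag_def)

lemma finite_E: "finite E"
  using finite_V edges_subset finite_subset by blast

lemma not_trancl_and_rtrancl_converse: "(x, y) \<in> E\<^sup>+ \<Longrightarrow> (y, x) \<in> E\<^sup>* \<Longrightarrow> False"
  using acyclic_E by (meson acyclic_def trancl_rtrancl_trancl)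

lemma leaf_below_by_tree_path:
  "a \<in> V \<Longrightarrow> \<exists>x \<in> leaves V E. (a, x) \<in> (tree_edges E)\<^sup>*"
  using tree_path_to_leaf[OF finite_E acyclic_E edges_subset] network
  by (auto simp: tree_child_network_def)

lemma no_path_between_children:
  assumes "(a, c) \<in> E" "(a, d) \<in> E" "d \<noteq> c"
  shows "(d, c) \<notin> E\<^sup>+"
proof
  assume "(d, c) \<in> E\<^sup>+"
  then obtain p where p: "(d, p) \<in> E\<^sup>*" "(p, c) \<in> E"
    using tranclD2 by metis
  have "p \<noteq> a"
    using p(1) assms(2) not_trancl_and_rtrancl_converse by blast
  hence "hybrid_node E c"
    using hybrid_node_if_two_parents[OF finite_E assms(1) p(2)] by blast
  moreover have "(a, p) \<in> E\<^sup>*"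
    using assms(2) p(1) by (meson converse_rtrancl_into_rtrancl)
  moreover have "c \<in> V"
    using edges_subset assms(1) by blast
  ultimately show False
    using unconnected assms(1) p(2) \<open>p \<noteq> a\<close>
    by (auto simp: hybrid_parents_unconnected_def parents_def)
qed

lemma cluster_subset_imp_ancestor_or_tree_descendant:
  assumes "a \<in> V" "cluster V E a \<subseteq> cluster V E b"
  shows "(b, a) \<in> E\<^sup>* \<or> (a, b) \<in> (tree_edges E)\<^sup>+"
proof -
  obtain x where x: "x \<in> leaves V E" "(a, x) \<in> (tree_edges E)\<^sup>*"
    using leaf_below_by_tree_path assms(1) by blast
  hence "x \<in> cluster V E a"
    using rtrancl_tree_edges_subset by (auto simp: cluster_def)
  hence "(b, x) \<in> E\<^sup>*"
    using assms(2) by (auto simp: cluster_def)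
  then show ?thesis
    using ancestor_of_tree_path_end[OF finite_E x(2)] by blast
qed

lemma tree_node_other_child:
  assumes "tree_node E a" "a \<in> V" "(a, w) \<in> E"
  obtains c where "(a, c) \<in> E" "c \<noteq> w"
proof -
  have "children E a \<noteq> {}"
    using assms(3) by (auto simp: children_def)
  moreover have "card (children E a) \<noteq> 1"
    using network assms(1,2) by (auto simp: tree_child_network_def outdeg_def)
  ultimately have "\<not> children E a \<subseteq> {w}"
    by (auto dest: subset_singletonD)
  then show ?thesis
    using that by (auto simp: children_def)
qed

lemma tree_node_cluster_not_subset_tree_descendant:
  assumes "tree_node E a" "a \<in> V" "(a, v) \<in> (tree_edges E)\<^sup>+"
  shows "\<not> cluster V E a \<subseteq> cluster V E v"
proof
  assume subset: "cluster V E a \<subseteq> cluster V E v"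
  obtain w where w: "(a, w) \<in> tree_edges E" "(w, v) \<in> (tree_edges E)\<^sup>*"
    using tranclD assms(3) by metis
  have aw: "(a, w) \<in> E"
    using w(1) tree_edges_subset by blast
  then obtain c where ac: "(a, c) \<in> E" and "c \<noteq> w"
    using tree_node_other_child assms(1,2) by blast
  have "c \<in> V"
    using ac edges_subset by blast
  then obtain z where z: "z \<in> leaves V E" "(c, z) \<in> (tree_edges E)\<^sup>*"
    using leaf_below_by_tree_path by blast
  have "(a, z) \<in> E\<^sup>*"
    using ac rtrancl_tree_edges_subset[OF z(2)] by (meson converse_rtrancl_into_rtrancl)
  hence "(v, z) \<in> E\<^sup>*"
    using subset z(1) by (auto simp: cluster_def)
  hence "(v, c) \<in> E\<^sup>* \<or> (c, v) \<in> (tree_edges E)\<^sup>*"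
    using ancestor_of_tree_path_end[OF finite_E z(2)] by (blast intro: trancl_into_rtrancl)
  moreover have "(v, c) \<in> E\<^sup>* \<Longrightarrow> (w, c) \<in> E\<^sup>*"
    using rtrancl_tree_edges_subset[OF w(2)] by simp
  moreover have "(w, c) \<in> E\<^sup>* \<or> (c, w) \<in> E\<^sup>*" if "(c, v) \<in> (tree_edges E)\<^sup>*"
    using ancestor_of_tree_path_end[OF finite_E that rtrancl_tree_edges_subset[OF w(2)]]
    by (blast dest: trancl_tree_edges_subset trancl_into_rtrancl)
  ultimately have "(w, c) \<in> E\<^sup>+ \<or> (c, w) \<in> E\<^sup>+"
    using \<open>c \<noteq> w\<close> by (metis rtranclD)
  then show False
    using no_path_between_children[OF ac aw] no_path_between_children[OF aw ac] \<open>c \<noteq> w\<close>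
    by blast
qed

lemma hybrid_parent_if_cluster_eq_tree_descendant:
  assumes "u \<in> V" "(u, v) \<in> (tree_edges E)\<^sup>+" "cluster V E u = cluster V E v"
  shows "hybrid_node E u \<and> children E u = {v}"
proof -
  have "\<not> tree_node E u"
    using tree_node_cluster_not_subset_tree_descendant assms by blast
  hence hybrid: "hybrid_node E u"
    by (simp add: tree_node_def hybrid_node_def)
  hence "card (children E u) = 1"
    using network assms(1) by (auto simp: tree_child_network_def outdeg_def)
  then obtain w where w: "children E u = {w}"
    by (auto simp: card_1_singleton_iff)
  obtain w' where "(u, w') \<in> tree_edges E" "(w', v) \<in> (tree_edges E)\<^sup>*"
    using tranclD assms(2) by metis
  moreover have "w' = w"
    using w calculation(1) by (auto simp: tree_edges_def children_def)
  ultimately have "tree_node E w" "w \<in> V" "(w, v) \<in> (tree_edges E)\<^sup>*"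
    using edges_subset by (auto simp: tree_edges_def)
  moreover have "cluster V E w = cluster V E v"
    using cluster_eq_if_children_singleton[OF w] assms(3) by simp
  ultimately have "w = v"
    using tree_node_cluster_not_subset_tree_descendant by (metis order_refl rtranclD)
  then show ?thesis
    using hybrid w by simp
qed

lemma cluster_eq_imp_tree_descendant:
  assumes "u \<in> V" "v \<in> V" "u \<noteq> v" "cluster V E u = cluster V E v"
  shows "(u, v) \<in> (tree_edges E)\<^sup>+ \<or> (v, u) \<in> (tree_edges E)\<^sup>+"
proof (rule ccontr)
  assume "\<not> ?thesis"
  moreover have "(v, u) \<in> E\<^sup>* \<or> (u, v) \<in> (tree_edges E)\<^sup>+"
    using cluster_subset_imp_ancestor_or_tree_descendant[of u v] assms by simp
  moreover have "(u, v) \<in> E\<^sup>* \<or> (v, u) \<in> (tree_edges E)\<^sup>+"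
    using cluster_subset_imp_ancestor_or_tree_descendant[of v u] assms by simp
  ultimately have "(u, v) \<in> E\<^sup>+" "(v, u) \<in> E\<^sup>*"
    using \<open>u \<noteq> v\<close> by (auto dest: rtranclD)
  then show False
    by (rule not_trancl_and_rtrancl_converse)
qed

end

theorem lemma5:
  fixes V :: "'a set" and E :: "('a \<times> 'a) set" and lab :: "'a \<Rightarrow> 's" and S :: "'s set"
  assumes "tree_child_network V E lab S"
    and "hybrid_parents_unconnected V E"
    and "u \<in> V" and "v \<in> V"
  shows "cluster V E u = cluster V E v \<longleftrightarrow>
           (u = v \<or> (hybrid_node E u \<and> children E u = {v})
                  \<or> (hybrid_node E v \<and> children E v = {u}))"
proof -
  interpret unconnected_tree_child_network V E lab S
    using assms(1,2) by unfold_locales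
  show ?thesis
  proof
    assume eq: "cluster V E u = cluster V E v"
    show "u = v \<or> (hybrid_node E u \<and> children E u = {v})
                \<or> (hybrid_node E v \<and> children E v = {u})"
    proof (cases "u = v")
      case False
      then consider "(u, v) \<in> (tree_edges E)\<^sup>+" | "(v, u) \<in> (tree_edges E)\<^sup>+"
        using cluster_eq_imp_tree_descendant assms(3,4) eq by blast
      then show ?thesis
        using hybrid_parent_if_cluster_eq_tree_descendant[OF assms(3) _ eq]
          hybrid_parent_if_cluster_eq_tree_descendant[OF assms(4) _ eq[symmetric]]
        by cases simp_all
    qed simp
  next
    assume "u = v \<or> (hybrid_node E u \<and> children E u = {v})
                \<or> (hybrid_node E v \<and> children E v = {u})"
    then show "cluster V E u = cluster V E v"
      using cluster_eq_if_children_singleton by metis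
  qed
qed

end
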